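(* In the setting of the context, for every $\mu\in U$ such that $(\Phi,\mu)$ has no singular connection, every periodic point of $f_\mu$ is regular.
   Context: Let $N\ge2$, $\lambda\in(0,1)$, and $\varphi_1,\dots,\varphi_N\colon[0,1]\to[0,1]$ bi-Lipschitz with Lipschitz constant $\le\lambda$, $\Phi=\{\varphi_i\}$, and assume $\varphi_i([0,1])\subset(0,1)$ for every $i$. Let $U=\{\mu=(\mu_1,\dots,\mu_{N-1}):0<\mu_1<\cdots<\mu_{N-1}<1\}$, $\mu_0=0$, $\mu_N=1$. For $\mu\in U$, $f_\mu\colon[0,1]\to[0,1]$ satisfies $f_\mu=\varphi_i$ on $A_{i,\mu}=(\mu_{i-1},\mu_i)$, $i=1,\dots,N$, and at each point of the singular set $S_\mu=\{0,\mu_1,\dots,\mu_{N-1},1\}$, $f_\mu$ is either left continuous or right continuous. A point is regular if its forward $f_\mu$-orbit never meets $S_\mu$. For $\alpha=(i_0,\dots,i_{n-1})$, $\varphi^\alpha=\varphi_{i_{n-1}}\circ\cdots\circ\varphi_{i_0}$; $(\Phi,\mu)$ has a singular connection if $\varphi^\alpha(\mu_i)=\mu_j$ for some $n\ge1$, $\alpha\in\{1,\dots,N\}^n$, $i,j\in\{1,\dots,N-1\}$. *)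

theory Defs
  imports "HOL-Analysis.Analysis"
begin

text \<open>The maps \<phi>_1..\<phi>_N are given as \<phi> :: nat \<Rightarrow> real \<Rightarrow> real, indices 1..N.
  The parameter \<mu> is nat \<Rightarrow> real with \<mu> 0 = 0 and \<mu> N = 1.\<close>

definition in_U :: "nat \<Rightarrow> (nat \<Rightarrow> real) \<Rightarrow> bool" where
  "in_U N \<mu> \<longleftrightarrow> \<mu> 0 = 0 \<and> \<mu> N = 1 \<and> (\<forall>i<N. \<mu> i < \<mu> (Suc i))"

definition singular_set :: "nat \<Rightarrow> (nat \<Rightarrow> real) \<Rightarrow> real set" where
  "singular_set N \<mu> = \<mu> ` {0..N}"

text \<open>\<phi>^\<alpha> = \<phi>_{i_{n-1}} \<circ> ... \<circ> \<phi>_{i_0} for \<alpha> = [i_0,...,i_{n-1}].\<close>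
definition phi_word :: "(nat \<Rightarrow> real \<Rightarrow> real) \<Rightarrow> nat list \<Rightarrow> real \<Rightarrow> real" where
  "phi_word \<phi> \<alpha> x = foldl (\<lambda>y k. \<phi> k y) x \<alpha>"

definition has_singular_connection ::
  "nat \<Rightarrow> (nat \<Rightarrow> real \<Rightarrow> real) \<Rightarrow> (nat \<Rightarrow> real) \<Rightarrow> bool" where
  "has_singular_connection N \<phi> \<mu> \<longleftrightarrow>
     (\<exists>\<alpha> i j. length \<alpha> \<ge> 1 \<and> set \<alpha> \<subseteq> {1..N} \<and> i \<in> {1..N-1} \<and> j \<in> {1..N-1}
        \<and> phi_word \<phi> \<alpha> (\<mu> i) = \<mu> j)"

definition is_f_mu ::
  "nat \<Rightarrow> (nat \<Rightarrow> real \<Rightarrow> real) \<Rightarrow> (nat \<Rightarrow> real) \<Rightarrow> (real \<Rightarrow> real) \<Rightarrow> bool" where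
  "is_f_mu N \<phi> \<mu> f \<longleftrightarrow>
     f ` {0..1} \<subseteq> {0..1} \<and>
     (\<forall>i\<in>{1..N}. \<forall>x\<in>{\<mu> (i-1)<..<\<mu> i}. f x = \<phi> i x) \<and>
     (\<forall>x\<in>singular_set N \<mu>.
        (0 < x \<and> continuous (at x within {0..x}) f) \<or>
        (x < 1 \<and> continuous (at x within {x..1}) f))"

definition regular_point ::
  "nat \<Rightarrow> (nat \<Rightarrow> real) \<Rightarrow> (real \<Rightarrow> real) \<Rightarrow> real \<Rightarrow> bool" where
  "regular_point N \<mu> f x \<longleftrightarrow> (\<forall>k. (f ^^ k) x \<notin> singular_set N \<mu>)"

definition periodic_point :: "(real \<Rightarrow> real) \<Rightarrow> real \<Rightarrow> bool" where
  "periodic_point f x \<longleftrightarrow> x \<in> {0..1} \<and> (\<exists>n\<ge>1. (f ^^ n) x = x)"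

definition bi_lipschitz_on :: "real set \<Rightarrow> (real \<Rightarrow> real) \<Rightarrow> bool" where
  "bi_lipschitz_on S g \<longleftrightarrow> (\<exists>L c. c > 0 \<and> (\<forall>x\<in>S. \<forall>y\<in>S.
      c * \<bar>x - y\<bar> \<le> \<bar>g x - g y\<bar> \<and> \<bar>g x - g y\<bar> \<le> L * \<bar>x - y\<bar>))"

end

theory Submission
  imports Defs
begin

text \<open>Along a periodic orbit every point is an image point of \<open>f\<^sub>\<mu>\<close>, hence lies in \<open>(0,1)\<close> and
  can only meet the interior singular points \<open>\<mu>\<^sub>1, \<dots>, \<mu>\<^bsub>N-1\<^esub>\<close>. By one-sided continuity
  \<open>f\<^sub>\<mu>\<close> agrees at every point of \<open>[0,1]\<close> with one of the branches \<open>\<phi>\<^sub>j\<close>, so \<open>f\<^sub>\<mu>\<^sup>n = \<phi>\<^sup>\<alpha>\<close> along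
  the orbit for a word \<open>\<alpha>\<close> of length \<open>n\<close>. If the orbit of period \<open>n\<close> passed through \<open>\<mu>\<^sub>m\<close>,
  then \<open>\<phi>\<^sup>\<alpha>(\<mu>\<^sub>m) = \<mu>\<^sub>m\<close> would be a singular connection.\<close>

lemma eq_if_eq_on_left_interval:
  fixes f g :: "real \<Rightarrow> real"
  assumes "a < y" "c < y"
    and "continuous (at y within {c..y}) f" "continuous (at y within {c..y}) g"
    and "\<forall>t\<in>{a<..<y}. f t = g t"
  shows "f y = g y"
proof -
  have at_y: "at y within {c..y} = at_left y"
    using \<open>c < y\<close> by (rule at_within_Icc_at_left)
  have "(f \<longlongrightarrow> f y) (at_left y)" "(g \<longlongrightarrow> g y) (at_left y)"
    using assms(3,4) at_y by (simp_all add: continuous_within)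
  moreover have "eventually (\<lambda>t. g t = f t) (at_left y)"
    using eventually_at_left_real[OF \<open>a < y\<close>] assms(5) by (auto elim: eventually_mono)
  ultimately have "(f \<longlongrightarrow> g y) (at_left y)" "(f \<longlongrightarrow> f y) (at_left y)"
    using Lim_transform_eventually by blast+
  then show ?thesis
    using tendsto_unique[OF trivial_limit_at_left_real] by metis
qed

lemma eq_if_eq_on_right_interval:
  fixes f g :: "real \<Rightarrow> real"
  assumes "y < b" "y < d"
    and "continuous (at y within {y..d}) f" "continuous (at y within {y..d}) g"
    and "\<forall>t\<in>{y<..<b}. f t = g t"
  shows "f y = g y"
proof -
  have at_y: "at y within {y..d} = at_right y"
    using \<open>y < d\<close> by (rule at_within_Icc_at_right)
  have "(f \<longlongrightarrow> f y) (at_right y)" "(g \<longlongrightarrow> g y) (at_right y)"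
    using assms(3,4) at_y by (simp_all add: continuous_within)
  moreover have "eventually (\<lambda>t. g t = f t) (at_right y)"
    using eventually_at_right_real[OF \<open>y < b\<close>] assms(5) by (auto elim: eventually_mono)
  ultimately have "(f \<longlongrightarrow> g y) (at_right y)" "(f \<longlongrightarrow> f y) (at_right y)"
    using Lim_transform_eventually by blast+
  then show ?thesis
    using tendsto_unique[OF trivial_limit_at_right_real] by metis
qed

lemma in_U_less:
  assumes "in_U N \<mu>" "i < j" "j \<le> N"
  shows "\<mu> i < \<mu> j"
  using assms(2,3)
proof (induction j)
  case 0
  then show ?case by simp
next
  case (Suc j)
  then have "\<mu> j < \<mu> (Suc j)"
    using assms(1) by (simp add: in_U_def)
  with Suc show ?case
    by (cases "i = j") force+
qed

lemma in_U_nonsingular_in_gap: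
  assumes U: "in_U N \<mu>" and y: "y \<in> {0..1}" and nonsingular: "y \<notin> singular_set N \<mu>"
  obtains i where "i \<in> {1..N}" "\<mu> (i - 1) < y" "y < \<mu> i"
proof -
  have ends: "\<mu> 0 = 0" "\<mu> N = 1"
    using U by (auto simp: in_U_def)
  have "y < \<mu> N"
    using y nonsingular ends by (cases "y = 1") (auto simp: singular_set_def)
  define i where "i = (LEAST i. y < \<mu> i)"
  have "y < \<mu> i"
    unfolding i_def using \<open>y < \<mu> N\<close> by (rule LeastI)
  moreover have "i \<le> N"
    unfolding i_def using \<open>y < \<mu> N\<close> by (rule Least_le)
  moreover have "i \<noteq> 0"
    using \<open>y < \<mu> i\<close> ends y by (cases "i = 0") auto
  moreover have "\<not> y < \<mu> (i - 1)"
    unfolding i_def using \<open>i \<noteq> 0\<close> i_def by (metis diff_less not_less_Least less_one neq0_conv)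
  moreover have "y \<noteq> \<mu> (i - 1)"
    using nonsingular \<open>i \<le> N\<close> by (auto simp: singular_set_def)
  ultimately show ?thesis
    using that[of i] by auto
qed

lemma in_U_interior_index:
  assumes "in_U N \<mu>" "m \<le> N" "\<mu> m \<in> {0<..<1}"
  shows "m \<in> {1..N-1}"
  using assms by (cases "m = 0"; cases "m = N") (auto simp: in_U_def)

lemma is_f_mu_eq_branch:
  assumes U: "in_U N \<mu>" and f: "is_f_mu N \<phi> \<mu> f"
    and cont: "\<And>i. i \<in> {1..N} \<Longrightarrow> continuous_on {0..1} (\<phi> i)"
    and y: "y \<in> {0..1}"
  obtains j where "j \<in> {1..N}" "f y = \<phi> j y"
proof (cases "y \<in> singular_set N \<mu>")
  case False
  then obtain i where "i \<in> {1..N}" "\<mu> (i - 1) < y" "y < \<mu> i"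
    using in_U_nonsingular_in_gap[OF U y] by blast
  then have "f y = \<phi> i y"
    using f unfolding is_f_mu_def by auto
  with \<open>i \<in> {1..N}\<close> show ?thesis
    by (rule that)
next
  case True
  then obtain m where m: "m \<le> N" "y = \<mu> m"
    by (auto simp: singular_set_def)
  have ends: "\<mu> 0 = 0" "\<mu> N = 1"
    using U by (auto simp: in_U_def)
  have branch_cont: "continuous (at y within S) (\<phi> j)" if "j \<in> {1..N}" "S \<subseteq> {0..1}" for j S
    using cont[OF that(1)] y that(2)
    by (meson continuous_on_eq_continuous_within continuous_within_subset)
  have "(0 < y \<and> continuous (at y within {0..y}) f) \<or> (y < 1 \<and> continuous (at y within {y..1}) f)"
    using f True unfolding is_f_mu_def by blast
  then show ?thesis
  proof
    assume left: "0 < y \<and> continuous (at y within {0..y}) f"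
    then have "m \<in> {1..N}"
      using m ends by (cases "m = 0") auto
    moreover have "\<mu> (m - 1) < y"
      using in_U_less[OF U, of "m - 1" m] m \<open>m \<in> {1..N}\<close> by auto
    moreover have "\<forall>t\<in>{\<mu> (m - 1)<..<y}. f t = \<phi> m t"
      using f \<open>m \<in> {1..N}\<close> m unfolding is_f_mu_def by auto
    moreover have "{0..y} \<subseteq> {0..1}"
      using y by auto
    ultimately show ?thesis
      using that eq_if_eq_on_left_interval[where c = 0 and g = "\<phi> m"] left branch_cont by blast
  next
    assume right: "y < 1 \<and> continuous (at y within {y..1}) f"
    then have "Suc m \<in> {1..N}"
      using m ends by (cases "m = N") auto
    moreover have "y < \<mu> (Suc m)"
      using in_U_less[OF U, of m "Suc m"] m \<open>Suc m \<in> {1..N}\<close> by auto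
    moreover have "\<forall>t\<in>{y<..<\<mu> (Suc m)}. f t = \<phi> (Suc m) t"
      using f \<open>Suc m \<in> {1..N}\<close> m unfolding is_f_mu_def by force
    moreover have "{y..1} \<subseteq> {0..1}"
      using y by auto
    ultimately show ?thesis
      using that eq_if_eq_on_right_interval[where d = 1 and g = "\<phi> (Suc m)"] right branch_cont by blast
  qed
qed

lemma phi_word_snoc: "phi_word \<phi> (\<alpha> @ [j]) x = \<phi> j (phi_word \<phi> \<alpha> x)"
  by (simp add: phi_word_def)

lemma funpow_in_invariant:
  assumes "f ` S \<subseteq> S" "z \<in> S"
  shows "(f ^^ n) z \<in> S"
  using assms by (induction n) auto

lemma funpow_eq_phi_word:
  assumes invariant: "f ` S \<subseteq> S"
    and branch: "\<And>y. y \<in> S \<Longrightarrow> \<exists>j\<in>J. f y = \<phi> j y"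
    and z: "z \<in> S"
  shows "\<exists>\<alpha>. length \<alpha> = n \<and> set \<alpha> \<subseteq> J \<and> (f ^^ n) z = phi_word \<phi> \<alpha> z"
proof (induction n)
  case 0
  show ?case by (simp add: phi_word_def)
next
  case (Suc n)
  then obtain \<alpha> where \<alpha>: "length \<alpha> = n" "set \<alpha> \<subseteq> J" "(f ^^ n) z = phi_word \<phi> \<alpha> z"
    by blast
  obtain j where "j \<in> J" "f ((f ^^ n) z) = \<phi> j ((f ^^ n) z)"
    using branch funpow_in_invariant[OF invariant z] by blast
  with \<alpha> show ?case
    by (intro exI[of _ "\<alpha> @ [j]"]) (simp add: phi_word_snoc)
qed

lemma funpow_periodic_orbit:
  assumes "(f ^^ n) x = x"
  shows "(f ^^ n) ((f ^^ k) x) = (f ^^ k) x"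
  using assms by (metis funpow_add add.commute comp_apply)

lemma funpow_periodic_orbit_in_image:
  assumes "f ` S \<subseteq> T" "T \<subseteq> S" "x \<in> S" "(f ^^ n) x = x" "n \<ge> 1"
  shows "(f ^^ k) x \<in> T"
proof -
  have "(f ^^ k) x = (f ^^ (n + k)) x"
    using funpow_periodic_orbit[OF assms(4)] by (simp add: funpow_add)
  also have "\<dots> = f ((f ^^ (n + k - 1)) x)"
    using assms(5) by (metis Suc_diff_1 add_gr_0 comp_apply funpow.simps(2) less_le_trans zero_less_one)
  finally show ?thesis
    using funpow_in_invariant[of f S x] assms(1-3) by blast
qed

theorem lemma4p4:
  fixes N :: nat and lam :: real and \<phi> :: "nat \<Rightarrow> real \<Rightarrow> real"
    and \<mu> :: "nat \<Rightarrow> real" and f :: "real \<Rightarrow> real" and x :: real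
  assumes "N \<ge> 2"
    and "0 < lam" and "lam < 1"
    and "\<And>i. i \<in> {1..N} \<Longrightarrow> bi_lipschitz_on {0..1} (\<phi> i)"
    and "\<And>i. i \<in> {1..N} \<Longrightarrow> lam-lipschitz_on {0..1} (\<phi> i)"
    and "\<And>i. i \<in> {1..N} \<Longrightarrow> \<phi> i ` {0..1} \<subseteq> {0<..<1}"
    and "in_U N \<mu>"
    and "\<not> has_singular_connection N \<phi> \<mu>"
    and "is_f_mu N \<phi> \<mu> f"
    and "periodic_point f x"
  shows "regular_point N \<mu> f x"
proof -
  have branch: "\<exists>j\<in>{1..N}. f y = \<phi> j y" if "y \<in> {0..1}" for y
    using is_f_mu_eq_branch[OF assms(7,9) lipschitz_on_continuous_on[OF assms(5)] that] by blast
  then have into_open: "f ` {0..1} \<subseteq> {0<..<1}"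
    using assms(6) by blast
  then have into_closed: "f ` {0..1} \<subseteq> {0..1}"
    by auto
  obtain n where n: "n \<ge> 1" "(f ^^ n) x = x" "x \<in> {0..1}"
    using assms(10) unfolding periodic_point_def by blast
  have "(f ^^ k) x \<notin> \<mu> ` {0..N}" for k
  proof
    assume "(f ^^ k) x \<in> \<mu> ` {0..N}"
    then obtain m where m: "m \<le> N" "(f ^^ k) x = \<mu> m" by auto
    have "\<mu> m \<in> {0<..<1}"
      using funpow_periodic_orbit_in_image[OF into_open _ n(3,2,1), of k] m(2) by fastforce
    obtain \<alpha> where \<alpha>: "length \<alpha> = n" "set \<alpha> \<subseteq> {1..N}" "(f ^^ n) (\<mu> m) = phi_word \<phi> \<alpha> (\<mu> m)"
      using funpow_eq_phi_word[OF into_closed branch, of "\<mu> m" n] \<open>\<mu> m \<in> {0<..<1}\<close> by auto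
    have "phi_word \<phi> \<alpha> (\<mu> m) = \<mu> m"
      using \<alpha>(3) funpow_periodic_orbit[OF n(2), of k] m(2) by simp
    with \<alpha>(1,2) n(1) in_U_interior_index[OF assms(7) m(1) \<open>\<mu> m \<in> {0<..<1}\<close>] have "has_singular_connection N \<phi> \<mu>"
      unfolding has_singular_connection_def by (intro exI[of _ \<alpha>] exI[of _ m]) auto
    with assms(8) show False ..
  qed
  then show ?thesis
    by (simp add: regular_point_def singular_set_def)
qed

end
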